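(* Let $A,B$ be disjoint sets of positive integers with $|A|=m\ge1$, $|B|=n\ge1$, let $\sigma=\sigma_1\cdots\sigma_m$ be a signed permutation of $A$ and $\pi=\pi_1\cdots\pi_n$ a signed permutation of $B$, and suppose $\sigma_m\prec\pi_n$. Let $\mathfrak S^{sb}(\sigma,\pi)$ be the set of shuffles $\alpha=\alpha_1\cdots\alpha_{n+m}$ of $\sigma$ and $\pi$ with $\alpha_{n+m}=\sigma_m$. Then $$\sum_{\alpha\in\mathfrak S^{sb}(\sigma,\pi)}q^{\mathrm{fmaj}(\alpha)}=q^{\mathrm{fmaj}(\sigma)+\mathrm{fmaj}(\pi)+2n}{n+m-1\brack n}_{q^2}.$$
   Context: A signed permutation of a finite set $A$ of positive integers is a word $w_1\cdots w_m$ of nonzero integers such that $|w_1|\cdots|w_m|$ is an arrangement of all elements of $A$. A shuffle of two words with disjoint sets of letters is a word containing both as subsequences and consisting of exactly their letters. Order $\prec$ on nonzero integers: $-1\prec-2\prec-3\prec\cdots$ (all negatives, $-a\prec-b$ iff $a<b$) $\prec1\prec2\prec3\prec\cdots$. For a word $w$ of distinct nonzero integers, $\mathrm{maj}_\prec(w)=\sum_{i:w_i\succ w_{i+1}}i$, $\mathrm{neg}(w)$ is the number of negative letters, and $\mathrm{fmaj}(w)=2\mathrm{maj}_\prec(w)+\mathrm{neg}(w)$. $[m]_x=1+x+\dots+x^{m-1}$, $[m]_x!=[1]_x\cdots[m]_x$, $[0]_x!=1$, ${N\brack K}_x=\frac{[N]_x!}{[K]_x![N-K]_x!}$. *)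

theory Defs
  imports "HOL-Computational_Algebra.Polynomial"
begin

definition prec :: "int \<Rightarrow> int \<Rightarrow> bool" where
  "prec a b \<longleftrightarrow> (a < 0 \<and> b > 0) \<or> (a < 0 \<and> b < 0 \<and> -a < -b) \<or> (a > 0 \<and> b > 0 \<and> a < b)"

definition signed_perm :: "int list \<Rightarrow> int set \<Rightarrow> bool" where
  "signed_perm w A \<longleftrightarrow> 0 \<notin> set w \<and> distinct (map abs w) \<and> set (map abs w) = A"

text \<open>maj with respect to prec, positions 1-indexed: sum of i with w_i succ w_(i+1).\<close>
definition maj_prec :: "int list \<Rightarrow> nat" where
  "maj_prec w = (\<Sum>i\<in>{i. 1 \<le> i \<and> i < length w \<and> prec (w ! i) (w ! (i - 1))}. i)"

definition neg :: "int list \<Rightarrow> nat" where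
  "neg w = length (filter (\<lambda>x. x < 0) w)"

definition fmaj :: "int list \<Rightarrow> nat" where
  "fmaj w = 2 * maj_prec w + neg w"

definition qint :: "nat \<Rightarrow> 'a::comm_ring_1 \<Rightarrow> 'a" where
  "qint m x = (\<Sum>i<m. x ^ i)"

definition qfact :: "nat \<Rightarrow> 'a::comm_ring_1 \<Rightarrow> 'a" where
  "qfact m x = (\<Prod>i=1..m. qint i x)"

definition qbinom :: "nat \<Rightarrow> nat \<Rightarrow> 'a::{comm_ring_1,divide} \<Rightarrow> 'a" where
  "qbinom N K x = qfact N x div (qfact K x * qfact (N - K) x)"

end

theory Submission
  imports Defs
begin

text \<open>Deleting the last letter c of a shuffle of u = u' c and v leaves a shuffle of u' and v
  ending in the last letter of u' or of v, and maj increases by the length of that shuffle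
  exactly when c precedes this letter. In the symmetric form
  \<open>\<Sum> x^maj = x^(maj u + maj v + [last u \<prec> last v] |v|) [|u|+|v|-1, |v|]\<close>, summing over
  shuffles that end with the last letter of u, the claim is therefore stable under this recursion
  (applied to (u', v) and to (v, u')), which reduces to the two Pascal recurrences for Gaussian
  binomials. The number of negative letters is the same for all shuffles and factors out.\<close>

lemma prec_asym: "prec a b \<Longrightarrow> \<not> prec b a"
  by (auto simp: prec_def)

lemma prec_trans: "prec a b \<Longrightarrow> prec b c \<Longrightarrow> prec a c"
  by (auto simp: prec_def)

lemma prec_cotrans: "b \<noteq> 0 \<Longrightarrow> prec a c \<Longrightarrow> prec a b \<or> prec b c"
  by (auto simp: prec_def)

lemma prec_total: "a \<noteq> 0 \<Longrightarrow> b \<noteq> 0 \<Longrightarrow> a \<noteq> b \<Longrightarrow> prec a b \<or> prec b a"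
  by (auto simp: prec_def)

lemma snoc_in_shuffles_iff:
  "zs @ [z] \<in> shuffles xs ys \<longleftrightarrow>
    (xs \<noteq> [] \<and> last xs = z \<and> zs \<in> shuffles (butlast xs) ys \<or>
     ys \<noteq> [] \<and> last ys = z \<and> zs \<in> shuffles xs (butlast ys))"
proof (induction xs ys arbitrary: zs rule: shuffles.induct)
  case (1 ys)
  show ?case by (cases ys rule: rev_cases) auto
next
  case (2 xs)
  show ?case by (cases xs rule: rev_cases) auto
next
  case (3 x xs y ys)
  show ?case
  proof (cases zs)
    case Nil
    then show ?thesis by (cases xs; cases ys) (auto simp: Cons_in_shuffles_iff)
  next
    case (Cons w zs')
    then show ?thesis
      using "3.IH"[of zs'] by (cases "xs = []"; cases "ys = []") (auto simp: Cons_in_shuffles_iff)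
  qed
qed

lemma last_in_shuffles:
  assumes "zs \<in> shuffles xs ys" "xs \<noteq> []" "ys \<noteq> []"
  shows "last zs = last xs \<or> last zs = last ys"
proof -
  from assms have "butlast zs @ [last zs] \<in> shuffles xs ys"
    by (metis Nil_in_shuffles append_butlast_last_id)
  then show ?thesis
    unfolding snoc_in_shuffles_iff by auto
qed

lemma shuffles_snoc_ending_in_snoc:
  assumes "c \<notin> set ys"
  shows "{zs \<in> shuffles (xs @ [c]) ys. last zs = c} = (\<lambda>zs. zs @ [c]) ` shuffles xs ys"
proof (intro set_eqI iffI)
  fix zs assume zs: "zs \<in> {zs \<in> shuffles (xs @ [c]) ys. last zs = c}"
  then have "zs = butlast zs @ [c]"
    by (metis (mono_tags, lifting) Nil_in_shuffles append_butlast_last_id mem_Collect_eq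
        snoc_eq_iff_butlast)
  with zs assms have "butlast zs \<in> shuffles xs ys"
    by (metis (mono_tags, lifting) last_in_set mem_Collect_eq snoc_in_shuffles_iff butlast_snoc
        last_snoc)
  with \<open>zs = butlast zs @ [c]\<close> show "zs \<in> (\<lambda>zs. zs @ [c]) ` shuffles xs ys"
    by blast
qed (auto simp: snoc_in_shuffles_iff)

lemma maj_prec_singleton [simp]: "maj_prec [c] = 0"
  by (simp add: maj_prec_def)

lemma maj_prec_snoc:
  "maj_prec (w @ [c]) = maj_prec w + (if w \<noteq> [] \<and> prec c (last w) then length w else 0)"
proof -
  let ?D = "\<lambda>w. {i. 1 \<le> i \<and> i < length w \<and> prec (w ! i) (w ! (i - 1))}"
  have "?D (w @ [c]) = ?D w \<union> (if w \<noteq> [] \<and> prec c (last w) then {length w} else {})"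
  proof (intro set_eqI iffI)
    fix i assume "i \<in> ?D (w @ [c])"
    then show "i \<in> ?D w \<union> (if w \<noteq> [] \<and> prec c (last w) then {length w} else {})"
      by (cases "i = length w"; cases "w = []")
        (auto simp: nth_append last_conv_nth split: if_splits)
  qed (auto simp: nth_append last_conv_nth split: if_splits)
  moreover have "finite (?D w)" "length w \<notin> ?D w"
    by auto
  ultimately show ?thesis
    unfolding maj_prec_def by auto
qed

lemma neg_shuffles: "zs \<in> shuffles xs ys \<Longrightarrow> neg zs = neg xs + neg ys"
  unfolding neg_def by (induction xs ys arbitrary: zs rule: shuffles.induct) auto

text \<open>\<open>gauss_binom m k x\<close> is the Gaussian binomial \<open>[m+k, k]\<^sub>x\<close>, indexed by the sizes of
  both parts so that no truncated subtraction occurs.\<close>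
fun gauss_binom :: "nat \<Rightarrow> nat \<Rightarrow> 'a::comm_ring_1 \<Rightarrow> 'a" where
  "gauss_binom 0 k x = 1"
| "gauss_binom (Suc m) 0 x = 1"
| "gauss_binom (Suc m) (Suc k) x =
     gauss_binom (Suc m) k x + x ^ Suc k * gauss_binom m (Suc k) x"

lemma gauss_binom_Suc_Suc_alt:
  "gauss_binom (Suc m) (Suc k) x =
     x ^ Suc m * gauss_binom (Suc m) k x + gauss_binom m (Suc k) x"
proof (induction m arbitrary: k)
  case 0
  show ?case
  proof (induction k)
    case (Suc k)
    have "x * gauss_binom 1 (Suc k) x + 1 = (x * gauss_binom 1 k x + 1) + x ^ Suc (Suc k)"
      by (simp add: algebra_simps)
    also have "x * gauss_binom 1 k x + 1 = gauss_binom 1 (Suc k) x"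
      using Suc by simp
    finally show ?case by simp
  qed simp
next
  case (Suc m)
  note IH_m = Suc.IH
  show ?case
  proof (induction k)
    case 0
    show ?case using IH_m[of 0] by (simp add: algebra_simps)
  next
    case (Suc k)
    let ?A = "gauss_binom (Suc (Suc m)) k x" and ?B = "gauss_binom (Suc m) (Suc k) x"
      and ?C = "gauss_binom m (Suc (Suc k)) x"
    have "gauss_binom (Suc (Suc m)) (Suc (Suc k)) x
        = (x ^ Suc (Suc m) * ?A + ?B) + x ^ Suc (Suc k) * (x ^ Suc m * ?B + ?C)"
      by (simp only: gauss_binom.simps(3)[of "Suc m" "Suc k"] Suc.IH IH_m)
    also have "\<dots> = x ^ Suc (Suc m) * (?A + x ^ Suc k * ?B) + (?B + x ^ Suc (Suc k) * ?C)"
      by (simp add: algebra_simps del: gauss_binom.simps)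
    also have "\<dots> = x ^ Suc (Suc m) * gauss_binom (Suc (Suc m)) (Suc k) x
        + gauss_binom (Suc m) (Suc (Suc k)) x"
      by (simp only: gauss_binom.simps(3))
    finally show ?case .
  qed
qed

lemma gauss_binom_commute: "gauss_binom m k x = gauss_binom k m x"
proof (induction m arbitrary: k)
  case 0
  show ?case by (cases k) simp_all
next
  case (Suc m)
  note IH_m = Suc.IH
  show ?case
  proof (induction k)
    case (Suc k)
    show ?case
      using IH_m[of "Suc k"] Suc.IH gauss_binom_Suc_Suc_alt[of k m x] by (simp add: algebra_simps)
  qed simp
qed

text \<open>Here p, q, r stand for \<open>c \<prec> l\<close>, \<open>l \<prec> e\<close>, \<open>c \<prec> e\<close> for three distinct letters;
  the hypotheses are transitivity in both directions.\<close>
lemma gauss_binom_shuffle_step: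
  fixes x :: "'a::comm_ring_1"
  assumes "p \<and> q \<longrightarrow> r" and "r \<longrightarrow> p \<or> q"
  shows "x ^ ((if p then a + b + 2 else 0) + (if q then Suc b else 0)) * gauss_binom a (Suc b) x
       + x ^ ((if r then a + b + 2 else 0) + (if q then 0 else Suc a)) * gauss_binom b (Suc a) x
       = x ^ ((if p then Suc a else 0) + (if r then Suc b else 0)) * gauss_binom (Suc a) (Suc b) x"
proof -
  note ring = gauss_binom_commute[of b] power_add algebra_simps
  from assms consider
      (first_recursion) "p \<and> q \<and> r \<or> \<not> p \<and> q \<and> \<not> r \<or> p \<and> \<not> q \<and> \<not> r"
    | (second_recursion) "\<not> p \<and> q \<and> r \<or> p \<and> \<not> q \<and> r \<or> \<not> p \<and> \<not> q \<and> \<not> r"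
    by blast
  then show ?thesis
  proof cases
    case first_recursion
    then show ?thesis by (auto simp: ring)
  next
    case second_recursion
    then show ?thesis
      by (subst gauss_binom_Suc_Suc_alt) (auto simp: ring simp del: gauss_binom.simps)
  qed
qed

lemma qint_add: "qint (m + n) x = qint m x + x ^ m * qint n x"
  by (induction n) (auto simp: qint_def algebra_simps power_add)

lemma qfact_add: "qfact (m + k) x = gauss_binom m k x * qfact m x * qfact k x"
proof (induction m k x rule: gauss_binom.induct)
  case (3 m k x)
  have "gauss_binom (Suc m) (Suc k) x * qfact (Suc m) x * qfact (Suc k) x
      = qint (Suc k) x * (gauss_binom (Suc m) k x * qfact (Suc m) x * qfact k x)
        + x ^ Suc k * qint (Suc m) x * (gauss_binom m (Suc k) x * qfact m x * qfact (Suc k) x)"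
    by (simp add: qfact_def algebra_simps)
  also have "\<dots> = (qint (Suc k) x + x ^ Suc k * qint (Suc m) x) * qfact (Suc m + k) x"
    using "3.IH" by (simp add: algebra_simps)
  also have "\<dots> = qfact (Suc m + Suc k) x"
    using qint_add[of "Suc k" "Suc m" x] by (simp add: qfact_def add.commute)
  finally show ?case by simp
qed (simp_all add: qfact_def)

lemma qbinom_eq_gauss_binom:
  fixes x :: "'a::idom_divide"
  assumes "qfact m x \<noteq> 0" "qfact k x \<noteq> 0"
  shows "qbinom (m + k) k x = gauss_binom m k x"
proof -
  have "qfact (m + k) x = gauss_binom m k x * (qfact k x * qfact m x)"
    using qfact_add[of m k x] by (simp only: ac_simps)
  with assms show ?thesis
    by (simp add: qbinom_def)
qed

lemma qfact_monom_nonzero: "qfact i (monom 1 n :: int poly) \<noteq> 0"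
proof -
  have "poly (qfact i (monom 1 n :: int poly)) 1 = int (fact i)"
    by (simp add: qfact_def qint_def poly_prod poly_sum poly_monom fact_prod)
  then show ?thesis by auto
qed

definition shuffle_maj_gf :: "'a::comm_ring_1 \<Rightarrow> int list \<Rightarrow> int list \<Rightarrow> 'a" where
  "shuffle_maj_gf x u v = (\<Sum>\<alpha>\<in>{\<alpha> \<in> shuffles u v. last \<alpha> = last u}. x ^ maj_prec \<alpha>)"

lemma shuffle_maj_gf_snoc_eq_sum:
  assumes "c \<notin> set v"
  shows "shuffle_maj_gf x (u @ [c]) v = (\<Sum>\<alpha>\<in>shuffles u v. x ^ maj_prec (\<alpha> @ [c]))"
  using assms
  by (simp add: shuffle_maj_gf_def shuffles_snoc_ending_in_snoc sum.reindex inj_on_def)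

lemma shuffle_maj_gf_singleton:
  assumes "c \<notin> set v" "v \<noteq> []"
  shows "shuffle_maj_gf x [c] v = x ^ (maj_prec v + (if prec c (last v) then length v else 0))"
  using shuffle_maj_gf_snoc_eq_sum[OF assms(1), of x "[]"] assms(2) by (simp add: maj_prec_snoc)

lemma shuffle_maj_gf_snoc:
  assumes "u \<noteq> []" "v \<noteq> []" "c \<notin> set v" "last u \<noteq> last v"
  shows "shuffle_maj_gf x (u @ [c]) v
       = x ^ (if prec c (last u) then length u + length v else 0) * shuffle_maj_gf x u v
       + x ^ (if prec c (last v) then length u + length v else 0) * shuffle_maj_gf x v u"
proof -
  let ?ending = "\<lambda>d. {\<alpha> \<in> shuffles u v. last \<alpha> = d}"
  let ?f = "\<lambda>\<alpha>. x ^ maj_prec (\<alpha> @ [c])"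
  have f_eq: "?f \<alpha> = x ^ (if prec c d then length u + length v else 0) * x ^ maj_prec \<alpha>"
    if "\<alpha> \<in> ?ending d" for \<alpha> d
    using that assms(1) by (auto simp: maj_prec_snoc length_shuffles power_add)
  have split: "?ending (last u) \<union> ?ending (last v) = shuffles u v"
    using last_in_shuffles assms(1,2) by blast
  have "sum ?f (?ending (last u) \<union> ?ending (last v))
      = sum ?f (?ending (last u)) + sum ?f (?ending (last v))"
    by (rule sum.union_disjoint) (use assms(4) in auto)
  then have "sum ?f (shuffles u v) = sum ?f (?ending (last u)) + sum ?f (?ending (last v))"
    unfolding split .
  also have "\<dots> = x ^ (if prec c (last u) then length u + length v else 0) * shuffle_maj_gf x u v
       + x ^ (if prec c (last v) then length u + length v else 0) * shuffle_maj_gf x v u"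
    unfolding shuffle_maj_gf_def sum_distrib_left shuffles_commutes[of v u]
    by (intro arg_cong2[where f = "(+)"] sum.cong) (simp_all add: f_eq)
  finally show ?thesis
    using assms(3) by (simp add: shuffle_maj_gf_snoc_eq_sum)
qed

lemma shuffle_maj_gf_eq:
  assumes "u \<noteq> []" "v \<noteq> []" "distinct (u @ v)" "0 \<notin> set (u @ v)"
  shows "shuffle_maj_gf x u v
       = x ^ (maj_prec u + maj_prec v + (if prec (last u) (last v) then length v else 0))
         * gauss_binom (length u - 1) (length v) x"
  using assms
proof (induction "length u + length v" arbitrary: u v rule: less_induct)
  case less
  obtain u' c where u: "u = u' @ [c]"
    using less.prems(1) by (cases u rule: rev_cases) auto
  have c_notin: "c \<notin> set v"
    using less.prems(3) u by auto
  show ?case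
  proof (cases "u' = []")
    case True
    with u c_notin less.prems(2) show ?thesis
      by (simp add: shuffle_maj_gf_singleton)
  next
    case False
    define l e where "l = last u'" and "e = last v"
    obtain a where a: "length u' = Suc a"
      using False by (cases u') auto
    obtain b where b: "length v = Suc b"
      using less.prems(2) by (cases v) auto
    have "l \<in> set u'" "e \<in> set v"
      using False less.prems(2) by (simp_all add: l_def e_def)
    with less.prems(3,4) u have l_nonzero: "l \<noteq> 0" and e_nonzero: "e \<noteq> 0" and l_ne_e: "l \<noteq> e"
      by auto
    have prems_uv: "distinct (u' @ v)" "0 \<notin> set (u' @ v)"
      and prems_vu: "distinct (v @ u')" "0 \<notin> set (v @ u')"
      using less.prems(3,4) u by auto
    have IH_uv: "shuffle_maj_gf x u' v
        = x ^ (maj_prec u' + maj_prec v + (if prec l e then Suc b else 0)) * gauss_binom a (Suc b) x"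
      using less.hyps[OF _ False less.prems(2) prems_uv] u a b by (simp add: l_def e_def)
    have "prec e l \<longleftrightarrow> \<not> prec l e"
      using prec_total[OF l_nonzero e_nonzero l_ne_e] prec_asym by blast
    then have IH_vu: "shuffle_maj_gf x v u'
        = x ^ (maj_prec v + maj_prec u' + (if prec l e then 0 else Suc a)) * gauss_binom b (Suc a) x"
      using less.hyps[OF _ less.prems(2) False prems_vu] u a b by (simp add: l_def e_def)
    have maj_u: "maj_prec u = maj_prec u' + (if prec c l then Suc a else 0)"
      using False u a by (simp add: maj_prec_snoc l_def)
    have order: "prec c l \<and> prec l e \<longrightarrow> prec c e" "prec c e \<longrightarrow> prec c l \<or> prec l e"
      using prec_trans prec_cotrans[OF l_nonzero] by blast+
    have "shuffle_maj_gf x u v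
        = x ^ (if prec c l then a + b + 2 else 0) * shuffle_maj_gf x u' v
        + x ^ (if prec c e then a + b + 2 else 0) * shuffle_maj_gf x v u'"
      using shuffle_maj_gf_snoc[OF False less.prems(2) c_notin, of x] l_ne_e a b
      unfolding u l_def e_def by (simp add: numeral_2_eq_2)
    also have "\<dots> = x ^ (maj_prec u' + maj_prec v)
        * (x ^ ((if prec c l then a + b + 2 else 0) + (if prec l e then Suc b else 0))
             * gauss_binom a (Suc b) x
         + x ^ ((if prec c e then a + b + 2 else 0) + (if prec l e then 0 else Suc a))
             * gauss_binom b (Suc a) x)"
      unfolding IH_uv IH_vu by (simp add: power_add algebra_simps)
    also have "\<dots> = x ^ (maj_prec u + maj_prec v + (if prec c e then Suc b else 0))
        * gauss_binom (Suc a) (Suc b) x"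
      unfolding gauss_binom_shuffle_step[OF order] maj_u by (simp add: power_add algebra_simps)
    finally show ?thesis
      using u a b by (simp add: e_def)
  qed
qed

theorem lemma5p7:
  fixes A B :: "int set" and \<sigma> \<pi> :: "int list"
  assumes "finite A" and "finite B"
    and "\<forall>a\<in>A. a > 0" and "\<forall>b\<in>B. b > 0"
    and "A \<inter> B = {}"
    and "card A \<ge> 1" and "card B \<ge> 1"
    and "signed_perm \<sigma> A" and "signed_perm \<pi> B"
    and "prec (last \<sigma>) (last \<pi>)"
  shows "(\<Sum>\<alpha>\<in>{\<alpha> \<in> shuffles \<sigma> \<pi>. last \<alpha> = last \<sigma>}. (monom 1 (fmaj \<alpha>) :: int poly))
       = monom 1 (fmaj \<sigma> + fmaj \<pi> + 2 * length \<pi>)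
         * qbinom (length \<pi> + length \<sigma> - 1) (length \<pi>) (monom 1 2 :: int poly)"
proof -
  define x :: "int poly" where "x = monom 1 2"
  have x_power: "x ^ k = monom 1 (2 * k)" for k
    by (simp add: x_def monom_power mult.commute)
  from assms(5-9) have "\<sigma> \<noteq> []" "\<pi> \<noteq> []" "distinct (\<sigma> @ \<pi>)" "0 \<notin> set (\<sigma> @ \<pi>)"
    by (auto simp: signed_perm_def distinct_map)
  then obtain a where a: "length \<sigma> = Suc a"
    and gf: "shuffle_maj_gf x \<sigma> \<pi>
      = x ^ (maj_prec \<sigma> + maj_prec \<pi> + length \<pi>) * gauss_binom a (length \<pi>) x"
    using shuffle_maj_gf_eq[of \<sigma> \<pi> x] assms(10) by (cases \<sigma>) auto
  have "(\<Sum>\<alpha>\<in>{\<alpha> \<in> shuffles \<sigma> \<pi>. last \<alpha> = last \<sigma>}. monom 1 (fmaj \<alpha>))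
      = monom 1 (neg \<sigma> + neg \<pi>) * shuffle_maj_gf x \<sigma> \<pi>"
    unfolding shuffle_maj_gf_def sum_distrib_left
    by (intro sum.cong) (auto simp: fmaj_def x_power mult_monom neg_shuffles add.commute)
  moreover have "qbinom (length \<pi> + length \<sigma> - 1) (length \<pi>) x = gauss_binom a (length \<pi>) x"
    using qbinom_eq_gauss_binom[OF qfact_monom_nonzero qfact_monom_nonzero] a
    by (simp add: x_def add.commute)
  ultimately show ?thesis
    unfolding gf by (simp add: x_def[symmetric] x_power fmaj_def mult_monom algebra_simps)
qed

end
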